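(* Let $\mathbb{F}_q$ be a fixed finite field with $q$ odd and $q\equiv1\pmod 4$. Then, as $g\to\infty$, $$\#\{P\in\mathbb{F}_q[T] \text{ monic irreducible}: \deg P=2g+1,\ L(\tfrac12,\chi_P)\neq 0\}\gg \frac{|P|}{(\log_q|P|)^2},$$ where $|P|=q^{2g+1}$ and $\log_q|P|=2g+1$.
   Context: $A=\mathbb{F}_q[T]$; for nonzero $f\in A$, $|f|=q^{\deg f}$. For a monic irreducible $Q$ and $a\in A$, $\left(\frac{a}{Q}\right)$ is $0$ if $Q\mid a$, $1$ if $a$ is a nonzero square mod $Q$, $-1$ otherwise; extended to monic $f=\prod Q_i^{e_i}$ by $\left(\frac{a}{f}\right)=\prod\left(\frac{a}{Q_i}\right)^{e_i}$, $\left(\frac{a}{1}\right)=1$. For monic irreducible $P$, $\chi_P(f)=\left(\frac{P}{f}\right)$. For $P$ of odd degree $2g+1$, $L(s,\chi_P)=\sum_{f\text{ monic}}\chi_P(f)|f|^{-s}$ is a polynomial in $u=q^{-s}$ of degree $2g$, and $L(\tfrac12,\chi_P)$ is its value at $u=q^{-1/2}$. The implied constant may depend on $q$. *)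

theory Defs
  imports "HOL-Analysis.Analysis" "HOL-Computational_Algebra.Computational_Algebra"
begin

definition leg_sym :: "'a::{field_gcd,finite} poly \<Rightarrow> 'a poly \<Rightarrow> int" where
  "leg_sym a Q = (if Q dvd a then 0
                  else if (\<exists>b. b^2 mod Q = a mod Q) then 1 else -1)"

definition jac_sym :: "'a::{field_gcd,finite} poly \<Rightarrow> 'a poly \<Rightarrow> int" where
  "jac_sym a f = (\<Prod>Q\<in>#prime_factorization f. leg_sym a Q)"

definition chi :: "'a::{field_gcd,finite} poly \<Rightarrow> 'a poly \<Rightarrow> int" where
  "chi P f = jac_sym P f"

text \<open>Coefficient of u^n in L(s,chi_P) = sum over lead_coeff f = 1 of chi_P(f) u^(deg f).\<close>
definition L_coeff :: "'a::{field_gcd,finite} poly \<Rightarrow> nat \<Rightarrow> int" where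
  "L_coeff P n = (\<Sum>f\<in>{f. lead_coeff f = 1 \<and> degree f = n}. chi P f)"

text \<open>L(1/2,chi_P): the series in u evaluated at u = q^(-1/2).\<close>
definition L_half :: "'a::{field_gcd,finite} poly \<Rightarrow> real" where
  "L_half P = (\<Sum>n. real_of_int (L_coeff P n) * (real CARD('a) powr (-1/2)) ^ n)"

end

theory Submission
  imports Defs "HOL-Algebra.Algebraic_Closure_Type" "HOL-Algebra.Sylow"
begin

(*
  For q = 1 (mod 4) we prove the corollary in a stronger form: L(1/2, chi_P) is nonzero for
  EVERY monic irreducible P of odd degree 2g+1.  The counted set is therefore the set of all monic
  irreducibles of degree n = 2g+1, and Gauss's count gives at least q^n / (2n) of them.

  By quadratic reciprocity (which has no sign when q = 1 mod 4) the coefficient of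
  u^m in L(u, chi_P) is the character sum c_m = sum over monic f of degree m of (f/P).  For
  m >= deg P it vanishes: multiplying the residue of f modulo P by a nonsquare constant c, which
  is a nonresidue modulo P because deg P is odd, is a sign-reversing bijection.  For m < deg P every
  term is +-1 and there are q^m of them, so c_m is odd.  Writing q^g L(q^(-1/2)) = X + Y sqrt q
  with integers X, Y, the parities of X and Y are those of g+1 and g, which contradicts X^2 = q Y^2.
*)

(* Keep the names prime, irreducible, coeff, degree, ... for the polynomial (type-class) notions
   rather than the structure-based ones of HOL-Algebra. *)
hide_const (open) Divisibility.prime Divisibility.irreducible up_ring.coeff UnivPoly.monom
  Polynomials.lead_coeff Polynomials.degree module.smult

section \<open>Finite fields\<close>

lemma nat_power_of_only_prime_divisor:
  fixes n p :: nat
  assumes "n > 0" "\<And>r. prime r \<Longrightarrow> r dvd n \<Longrightarrow> r = p"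
  shows "\<exists>k. n = p ^ k"
  using assms
proof (induction n rule: less_induct)
  case (less n)
  show ?case
  proof (cases "n = 1")
    case True then show ?thesis by (intro exI[of _ 0]) auto
  next
    case False
    then obtain r where r: "prime r" "r dvd n" using prime_factor_nat by blast
    then obtain m where m: "n = p * m" using less.prems by (auto elim: dvdE)
    have "m < n" "m > 0" using m less.prems(1) r prime_gt_1_nat less.prems(2)[OF r] by auto
    moreover have "\<And>r. prime r \<Longrightarrow> r dvd m \<Longrightarrow> r = p" using less.prems(2) m by auto
    ultimately obtain k where "m = p ^ k" using less.IH by blast
    then show ?thesis using m by (intro exI[of _ "Suc k"]) auto
  qed
qed

lemma prime_CHAR_finite_field: "prime CHAR('a::{field,finite})"
  using prime_CHAR_semidom[where ?'a='a] finite_imp_CHAR_pos[where ?'a='a] by auto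

lemma additive_pow_eq_of_nat:
  fixes x :: "'a::ring_1"
  shows "x [^]\<^bsub>\<lparr>carrier = UNIV, monoid.mult = (+), one = (0::'a)\<rparr>\<^esub> (n::nat) = of_nat n * x"
  by (induction n) (auto simp: algebra_simps)

(* The order q of a finite field is a power of its characteristic p: a prime r \<noteq> p dividing q
   would give (Sylow/Cauchy) a nonzero element h with r*h = 0 = p*h, forcing h = 0.  This is what
   makes x \<mapsto> x^q additive. *)
lemma card_finite_field_CHAR_power:
  "\<exists>k. CARD('a::{field,finite}) = CHAR('a) ^ k"
proof (rule nat_power_of_only_prime_divisor)
  show "CARD('a) > 0" by simp
next
  fix r assume r: "prime r" "r dvd CARD('a)"
  show "r = CHAR('a)"
  proof (rule ccontr)
    assume ne: "r \<noteq> CHAR('a)"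
    define G where "G = \<lparr> carrier = (UNIV :: 'a set), monoid.mult = (+), one = (0 :: 'a) \<rparr>"
    interpret group G
    proof (rule groupI)
      fix x assume "x \<in> carrier G"
      show "\<exists>y\<in>carrier G. y \<otimes>\<^bsub>G\<^esub> x = \<one>\<^bsub>G\<^esub>"
        by (intro bexI[of _ "-x"]) (auto simp: G_def)
    qed (auto simp: G_def add_ac)
    obtain m where m: "CARD('a) = r * m" using r by (auto elim: dvdE)
    have "\<exists>H. subgroup H G \<and> card H = r ^ 1"
    proof (rule sylow_thm[of r G 1 m])
      show "group G" by (rule is_group)
      show "order G = r ^ 1 * m" using m by (simp add: G_def order_def)
      show "finite (carrier G)" by (simp add: G_def)
    qed (use r in simp)
    then obtain H where H: "subgroup H G" "card H = r" by auto
    interpret HG: group "G\<lparr>carrier := H\<rparr>" using subgroup_imp_group[OF H(1)] .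
    have "card H \<ge> 2" using H(2) r prime_ge_2_nat by auto
    then have "\<not> H \<subseteq> {0}" using card_mono[of "{0::'a}" H] by fastforce
    then obtain h where h: "h \<in> H" "h \<noteq> 0" by auto
    have "h [^]\<^bsub>G\<lparr>carrier := H\<rparr>\<^esub> order (G\<lparr>carrier := H\<rparr>) = \<one>\<^bsub>G\<lparr>carrier := H\<rparr>\<^esub>"
      using HG.pow_order_eq_1[of h] h by simp
    moreover have "order (G\<lparr>carrier := H\<rparr>) = r" using H(2) by (simp add: order_def)
    moreover have "h [^]\<^bsub>G\<lparr>carrier := H\<rparr>\<^esub> (n::nat) = h [^]\<^bsub>G\<^esub> n" for n
      by (simp add: nat_pow_def)
    ultimately have hr: "of_nat r * h = 0"
      using additive_pow_eq_of_nat[of h r] by (simp add: G_def)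
    have "coprime r CHAR('a)"
      using r(1) prime_CHAR_finite_field[where ?'a='a] ne by (simp add: primes_coprime)
    then obtain x y where xy: "r * x = CHAR('a) * y + 1"
      using bezout_nat[of r "CHAR('a)"] r(1) by (auto simp: prime_gt_0_nat)
    have "of_nat x * (of_nat r * h) = of_nat y * (of_nat CHAR('a) * h) + (h :: 'a)"
      using arg_cong[OF xy, of "\<lambda>k. of_nat k * h :: 'a"] by (simp add: algebra_simps)
    then have "h = 0" using hr by simp
    with h show False by simp
  qed
qed

lemma card_finite_field_ge2: "CARD('a::{field,finite}) \<ge> 2"
proof -
  have "card {0::'a, 1} \<le> CARD('a)" by (rule card_mono) auto
  then show ?thesis by simp
qed

lemma CHAR_ge3_if_odd_card:
  assumes "odd CARD('a::{field,finite})"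
  shows "CHAR('a) \<ge> 3"
proof -
  have "CHAR('a) \<ge> 2" using prime_CHAR_finite_field[where ?'a='a] prime_ge_2_nat by blast
  moreover obtain k where k: "CARD('a) = CHAR('a) ^ k" using card_finite_field_CHAR_power by blast
  moreover have "k \<noteq> 0" using k card_finite_field_ge2[where ?'a='a] by (cases k) auto
  ultimately show ?thesis using assms by (cases "CHAR('a) = 2") auto
qed

lemma finite_field_pow_card:
  fixes x :: "'a::{field,finite}"
  shows "x ^ CARD('a) = x"
proof (cases "x = 0")
  case False
  have "x * (\<Prod>y\<in>UNIV-{0}. x * y) = x * x ^ (CARD('a) - 1) * \<Prod>(UNIV-{0})"
    by (simp add: prod.distrib mult_ac)
  also have "x * x ^ (CARD('a) - 1) = x ^ CARD('a)"
    using finite_UNIV_card_ge_0[where ?'a = 'a] by (simp flip: power_Suc)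
  also have "(\<Prod>y\<in>UNIV-{0}. x * y) = (\<Prod>y\<in>UNIV-{0}. y)"
    by (rule prod.reindex_bij_witness[of _ "\<lambda>y. y / x" "\<lambda>y. x * y"]) (use False in auto)
  finally show ?thesis by simp
qed (use finite_UNIV_card_ge_0[where ?'a = 'a] in auto)

lemma finite_field_pow_card_power:
  fixes x :: "'a::{field,finite}"
  shows "x ^ (CARD('a) ^ n) = x"
  by (induction n) (simp_all add: finite_field_pow_card power_mult)

(* In odd characteristic some constant is not a square (squaring identifies 1 and -1). *)
lemma finite_field_exists_nonsquare:
  assumes "odd CARD('a::{field,finite})"
  shows "\<exists>c::'a. \<forall>y. y^2 \<noteq> c"
proof (rule ccontr)
  assume "\<not> ?thesis"
  then have "surj (\<lambda>y::'a. y^2)" unfolding surj_def by metis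
  then have "inj (\<lambda>y::'a. y^2)" by (rule finite_UNIV_surj_inj[rotated]) simp
  then have "(1::'a) = -1" by (rule injD) simp
  then have "CHAR('a) dvd 2"
    by (simp add: eq_neg_iff_add_eq_0 flip: of_nat_eq_0_iff_char_dvd)
  then have "CHAR('a) \<le> 2" by (simp add: dvd_imp_le)
  then show False using CHAR_ge3_if_odd_card[OF assms] by simp
qed

(* Polynomials with no coefficient in degree \<ge> d, i.e. zero or of degree < d: the residues mod
   a polynomial of degree d. *)
definition polys_below :: "nat \<Rightarrow> 'a::zero poly set" where
  "polys_below d = {f. \<forall>i\<ge>d. coeff f i = 0}"

lemma polys_below_eq: "d > 0 \<Longrightarrow> polys_below d = {f. degree f < d}"
  unfolding polys_below_def by (auto simp: coeff_eq_0 intro: le_degree leI)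

lemma card_polys_below:
  "finite (polys_below d :: 'a::{zero,finite} poly set)"
  "card (polys_below d :: 'a poly set) = CARD('a) ^ d"
proof -
  let ?L = "{xs :: 'a list. set xs \<subseteq> UNIV \<and> length xs = d}"
  have bij: "bij_betw Poly ?L (polys_below d)"
  proof (rule bij_betw_byWitness[of _ "\<lambda>f. map (coeff f) [0..<d]"])
    show "\<forall>a\<in>?L. map (coeff (Poly a)) [0..<d] = a"
      by (auto intro!: nth_equalityI simp: nth_default_nth)
    show "\<forall>f\<in>polys_below d. Poly (map (coeff f) [0..<d]) = f"
      by (auto simp: polys_below_def poly_eq_iff nth_default_def)
    show "Poly ` ?L \<subseteq> polys_below d"
      by (auto simp: polys_below_def nth_default_def)
  qed auto
  show "finite (polys_below d :: 'a poly set)"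
    using bij_betw_finite[OF bij] finite_lists_length_eq[of "UNIV::'a set" d] by simp
  show "card (polys_below d :: 'a poly set) = CARD('a) ^ d"
    using bij_betw_same_card[OF bij] card_lists_length_eq[of "UNIV::'a set" d] by simp
qed

definition monic_deg :: "nat \<Rightarrow> 'a::{zero,one} poly set" where
  "monic_deg n = {f. lead_coeff f = 1 \<and> degree f = n}"

lemma monic_deg_image:
  "monic_deg n = (\<lambda>g. monom (1::'a::comm_ring_1) n + g) ` polys_below n"
proof (rule Set.set_eqI, rule iffI)
  fix f :: "'a poly" assume "f \<in> monic_deg n"
  then have "f - monom 1 n \<in> polys_below n"
    by (auto simp: monic_deg_def polys_below_def coeff_monom coeff_eq_0)
  then show "f \<in> (\<lambda>g. monom 1 n + g) ` polys_below n"
    by (intro image_eqI[of _ _ "f - monom 1 n"]) auto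
next
  fix f :: "'a poly" assume "f \<in> (\<lambda>g. monom 1 n + g) ` polys_below n"
  then obtain g where g: "g \<in> polys_below n" "f = monom 1 n + g" by auto
  have c: "coeff f i = (if i = n then 1 else if i > n then 0 else coeff g i)" for i
    using g by (auto simp: polys_below_def coeff_monom)
  have "degree f = n"
    by (rule antisym, rule degree_le) (use c in \<open>auto intro: le_degree\<close>)
  then show "f \<in> monic_deg n" using c by (simp add: monic_deg_def)
qed

lemma card_monic_deg:
  "finite (monic_deg n :: 'a::{comm_ring_1,finite} poly set)"
  "card (monic_deg n :: 'a poly set) = CARD('a) ^ n"
proof -
  have inj: "inj_on (\<lambda>g. monom (1::'a) n + g) (polys_below n)" by (auto intro: inj_onI)
  show "finite (monic_deg n :: 'a poly set)" "card (monic_deg n :: 'a poly set) = CARD('a) ^ n"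
    unfolding monic_deg_image using card_image[OF inj] card_polys_below[where ?'a='a, of n] by auto
qed

lemma monic_deg_add_lower:
  fixes f g :: "'a::comm_ring_1 poly"
  assumes "f \<in> monic_deg n" "degree g < n"
  shows "f + g \<in> monic_deg n"
proof -
  have df: "degree f = n" "lead_coeff f = 1" using assms(1) by (auto simp: monic_deg_def)
  have "degree (f + g) = n" using degree_add_eq_left[of g f] assms(2) df by simp
  moreover have "coeff g n = 0" using assms(2) by (simp add: coeff_eq_0)
  ultimately show ?thesis using df by (simp add: monic_deg_def)
qed

abbreviation lift :: "'a::field poly \<Rightarrow> 'a alg_closure poly" where
  "lift \<equiv> map_poly to_ac"

lemma lift_add [simp]: "lift (f + g) = lift f + lift g"
  by (simp add: poly_eq_iff coeff_map_poly)

lemma lift_diff [simp]: "lift (f - g) = lift f - lift g"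
  by (simp add: poly_eq_iff coeff_map_poly)

lemma lift_mult [simp]: "lift (f * g) = lift f * lift g"
  by (simp add: poly_eq_iff coeff_mult coeff_map_poly to_ac_sum)

lemma lift_power [simp]: "lift (f ^ n) = lift f ^ n"
  by (induction n) auto

lemma lift_monom [simp]: "lift (monom c n) = monom (to_ac c) n"
  by (simp add: map_poly_monom)

lemma degree_lift [simp]: "degree (lift f) = degree f"
  by (simp add: degree_map_poly)

lemma lift_eq_0_iff [simp]: "lift f = 0 \<longleftrightarrow> f = 0"
  by (simp add: map_poly_eq_0_iff)

(* The q-th power Frobenius, iterated e times, is additive on the algebraic closure and fixes
   the coefficients of polynomials over F_q; hence it commutes with their evaluation. *)
lemma card_power_is_CHAR_power: "\<exists>k. CARD('a::{field,finite}) ^ e = CHAR('a alg_closure) ^ k"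
proof -
  obtain k where "CARD('a) = CHAR('a) ^ k" using card_finite_field_CHAR_power by blast
  then show ?thesis by (intro exI[of _ "k * e"]) (simp add: power_mult)
qed

lemma prime_CHAR_alg_closure: "prime CHAR('a::{field,finite} alg_closure)"
  using prime_CHAR_finite_field[where ?'a='a] by simp

lemma frobenius_diff:
  fixes x y :: "'a::{field,finite} alg_closure"
  shows "(x - y) ^ (CARD('a) ^ e) = x ^ (CARD('a) ^ e) - y ^ (CARD('a) ^ e)"
proof -
  obtain k where k: "CARD('a) ^ e = CHAR('a alg_closure) ^ k" using card_power_is_CHAR_power by blast
  have "((x - y) + y) ^ (CARD('a) ^ e) = (x - y) ^ (CARD('a) ^ e) + y ^ (CARD('a) ^ e)"
    by (rule freshmans_dream'[OF prime_CHAR_alg_closure k])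
  then show ?thesis by simp
qed

lemma frobenius_inj:
  fixes x y :: "'a::{field,finite} alg_closure"
  assumes "x ^ (CARD('a) ^ e) = y ^ (CARD('a) ^ e)"
  shows "x = y"
  using assms frobenius_diff[of x y e] by (metis eq_iff_diff_eq_0 power_eq_0_iff)

lemma frobenius_poly_lift:
  fixes g :: "'a::{field,finite} poly"
  shows "poly (lift g) (x ^ (CARD('a) ^ e)) = poly (lift g) x ^ (CARD('a) ^ e)"
proof -
  obtain k where k: "CARD('a) ^ e = CHAR('a alg_closure) ^ k" using card_power_is_CHAR_power by blast
  have fix_coeff: "coeff (lift g) i ^ (CARD('a) ^ e) = coeff (lift g) i" for i
    by (simp add: coeff_map_poly finite_field_pow_card_power flip: to_ac_power)
  have "poly (lift g) x ^ (CARD('a) ^ e) = (\<Sum>i\<le>degree g. coeff (lift g) i * x ^ i) ^ (CARD('a) ^ e)"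
    by (simp add: poly_altdef)
  also have "\<dots> = (\<Sum>i\<le>degree g. (coeff (lift g) i * x ^ i) ^ (CARD('a) ^ e))"
    by (rule freshmans_dream_sum'[OF prime_CHAR_alg_closure k])
  also have "\<dots> = poly (lift g) (x ^ (CARD('a) ^ e))"
    by (simp add: poly_altdef power_mult_distrib fix_coeff mult.commute flip: power_mult)
  finally show ?thesis ..
qed

lemma irreducible_degree_pos:
  fixes Q :: "'a::field poly"
  assumes "irreducible Q"
  shows "degree Q > 0"
  using assms irreducible_not_unit[OF assms] is_unit_iff_degree[of Q] by fastforce

lemma exists_root_lift:
  fixes Q :: "'a::field poly"
  assumes "irreducible Q"
  obtains \<beta> where "poly (lift Q) \<beta> = 0"
  using alg_closed_imp_poly_has_root[of "lift Q"] irreducible_degree_pos[OF assms] by auto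

(* A root \<beta> of an irreducible Q is a root of g exactly when Q divides g; so the residue of g
   modulo Q is faithfully represented by g(\<beta>). *)
lemma root_lift_iff_dvd:
  fixes Q g :: "'a::field_gcd poly"
  assumes "irreducible Q" "poly (lift Q) \<beta> = 0"
  shows "poly (lift g) \<beta> = 0 \<longleftrightarrow> Q dvd g"
proof
  assume g0: "poly (lift g) \<beta> = 0"
  show "Q dvd g"
  proof (rule ccontr)
    assume "\<not> Q dvd g"
    moreover have "prime_elem Q" using assms(1) by (simp add: prime_elem_iff_irreducible)
    ultimately have "coprime Q g" using prime_elem_imp_coprime by blast
    then obtain u v where "u * Q + v * g = 1"
      using bezout_coefficients_fst_snd[of Q g] by (metis coprime_imp_gcd_eq_1)
    then have "poly (lift (u * Q + v * g)) \<beta> = 1" by simp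
    then show False using assms(2) g0 by simp
  qed
qed (use assms(2) in \<open>auto elim: dvdE\<close>)

lemma eval_root_inj_on_polys_below:
  fixes Q :: "'a::{field_gcd,finite} poly"
  assumes "irreducible Q" "poly (lift Q) \<beta> = 0"
  shows "inj_on (\<lambda>g. poly (lift g) \<beta>) (polys_below (degree Q))"
proof (rule inj_onI)
  fix f g :: "'a poly"
  assume f: "f \<in> polys_below (degree Q)" and g: "g \<in> polys_below (degree Q)"
     and "poly (lift f) \<beta> = poly (lift g) \<beta>"
  then have "Q dvd f - g" using root_lift_iff_dvd[OF assms, of "f - g"] by simp
  moreover have "degree (f - g) < degree Q"
    using f g irreducible_degree_pos[OF assms(1)] by (auto simp: polys_below_eq intro: degree_diff_less)
  ultimately show "f = g" by (metis dvd_imp_degree_le leD eq_iff_diff_eq_0)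
qed

lemma monom_minus_lower:
  fixes p :: "'b::comm_ring_1 poly"
  assumes "degree p < m"
  shows "degree (monom 1 m - p) = m" "lead_coeff (monom 1 m - p) = 1"
proof -
  have "degree (monom 1 m + - p) = m"
    using degree_add_eq_left[of "-p" "monom 1 m"] assms by (simp add: degree_monom_eq)
  then show deg: "degree (monom 1 m - p) = m" by simp
  show "lead_coeff (monom 1 m - p) = 1" using assms by (simp add: deg coeff_eq_0)
qed

lemma card_roots_monom_minus:
  fixes p :: "'b::idom poly"
  assumes "degree p < m"
  shows "finite {x. poly (monom 1 m - p) x = 0}" "card {x. poly (monom 1 m - p) x = 0} \<le> m"
proof -
  note deg = monom_minus_lower(1)[OF assms]
  then have "monom 1 m - p \<noteq> 0" using assms by auto
  then show "finite {x. poly (monom 1 m - p) x = 0}" "card {x. poly (monom 1 m - p) x = 0} \<le> m"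
    using poly_roots_finite card_poly_roots_bound deg by metis+
qed

(* If \<beta> is a root of an irreducible Q of degree d then \<beta> is not fixed by a shorter iterate of
   the Frobenius: all q^d values g(\<beta>) with deg g < d would be roots of X^(q^e) - X. *)
lemma no_short_period:
  fixes Q :: "'a::{field_gcd,finite} poly"
  assumes "irreducible Q" "poly (lift Q) \<beta> = 0" "0 < e" "e < degree Q"
  shows "\<beta> ^ (CARD('a) ^ e) \<noteq> \<beta>"
proof
  assume per: "\<beta> ^ (CARD('a) ^ e) = \<beta>"
  define m where "m = CARD('a) ^ e"
  define F where "F = (\<lambda>g. poly (lift g) \<beta>) ` polys_below (degree Q)"
  have card_F: "card F = CARD('a) ^ degree Q"
    unfolding F_def using card_image[OF eval_root_inj_on_polys_below[OF assms(1,2)]]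
      card_polys_below[where ?'a='a] by simp
  have "CARD('a) ^ 1 \<le> m" unfolding m_def by (rule power_increasing) (use assms(3) in auto)
  then have "degree [:0, 1::'a alg_closure:] < m" using card_finite_field_ge2[where ?'a='a] by simp
  note roots = card_roots_monom_minus[OF this]
  have "F \<subseteq> {x. poly (monom 1 m - [:0,1:]) x = 0}"
  proof
    fix x assume "x \<in> F"
    then obtain g where x: "x = poly (lift g) \<beta>" by (auto simp: F_def)
    have "x ^ m = x" unfolding x m_def by (simp add: per flip: frobenius_poly_lift)
    then show "x \<in> {x. poly (monom 1 m - [:0,1:]) x = 0}" by (simp add: poly_monom)
  qed
  then have "card F \<le> m" using card_mono[OF roots(1)] roots(2) by (meson le_trans)
  moreover have "m < CARD('a) ^ degree Q"
    unfolding m_def by (rule power_strict_increasing) (use assms(4) card_finite_field_ge2[where ?'a='a] in auto)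
  ultimately show False using card_F by simp
qed

lemma prod_linear_factors_dvd:
  fixes p :: "'b::field poly"
  assumes "finite S" "\<forall>x\<in>S. poly p x = 0"
  shows "(\<Prod>x\<in>S. [:-x,1:]) dvd p"
  using assms
proof (induction S arbitrary: p rule: finite_induct)
  case (insert x S)
  then have "(\<Prod>x\<in>S. [:-x,1:]) dvd p" by simp
  then obtain r where r: "p = (\<Prod>x\<in>S. [:-x,1:]) * r" by (auto elim: dvdE)
  have "poly (\<Prod>x\<in>S. [:-x,1:]) x \<noteq> 0" using insert(1,2) by (auto simp: poly_prod)
  then have "poly r x = 0" using r insert.prems by simp
  then have "[:-x,1:] dvd r" by (simp add: poly_eq_0_iff_dvd)
  then have "[:-x,1:] * (\<Prod>x\<in>S. [:-x,1:]) dvd r * (\<Prod>x\<in>S. [:-x,1:])"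
    by (rule mult_dvd_mono) simp
  then show ?case using r insert(1,2) by (simp del: mult_pCons_left add: mult.commute)
qed simp

lemma frobenius_orbit:
  fixes Q :: "'a::{field_gcd,finite} poly"
  assumes irr: "irreducible Q" and mon: "lead_coeff Q = 1" and root: "poly (lift Q) \<beta> = 0"
  shows "lift Q = (\<Prod>i<degree Q. [:-(\<beta> ^ (CARD('a) ^ i)), 1:])"
    and "\<beta> ^ (CARD('a) ^ degree Q) = \<beta>"
proof -
  define d where "d = degree Q"
  define c where "c i = \<beta> ^ (CARD('a) ^ i)" for i
  have d_pos: "d > 0" using irreducible_degree_pos[OF irr] by (simp add: d_def)
  have coincide: "i = 0 \<and> j = d" if eq: "c j = c i" and "i < j" "j \<le> d" for i j
  proof -
    have "CARD('a) ^ j = CARD('a) ^ (j - i) * CARD('a) ^ i"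
      using \<open>i < j\<close> by (simp flip: power_add)
    then have "c j = c (j - i) ^ (CARD('a) ^ i)" by (simp add: c_def power_mult)
    then have "c (j - i) ^ (CARD('a) ^ i) = \<beta> ^ (CARD('a) ^ i)" using eq by (simp add: c_def)
    then have "c (j - i) = \<beta>" by (rule frobenius_inj)
    then have "\<not> j - i < d"
      using no_short_period[OF irr root, of "j - i"] \<open>i < j\<close> by (auto simp: c_def d_def)
    then show ?thesis using \<open>i < j\<close> \<open>j \<le> d\<close> by linarith
  qed
  have inj: "inj_on c {..<d}"
  proof (rule inj_onI)
    fix i j assume i: "i \<in> {..<d}" and j: "j \<in> {..<d}" and eq: "c i = c j"
    show "i = j"
    proof (rule linorder_cases[of i j])
      assume "i < j" then show ?thesis using coincide[of j i] eq j by auto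
    next
      assume "j < i" then show ?thesis using coincide[of i j] eq i by auto
    qed
  qed
  have "(\<Prod>x\<in>c ` {..<d}. [:-x,1:]) dvd lift Q"
    by (rule prod_linear_factors_dvd) (auto simp: c_def root frobenius_poly_lift)
  then have "(\<Prod>i<d. [:-c i,1:]) dvd lift Q" by (simp add: prod.reindex[OF inj])
  then obtain r where r: "lift Q = (\<Prod>i<d. [:-c i,1:]) * r" by (elim dvdE)
  have deg_prod: "degree (\<Prod>i<d. [:-c i,1:]) = d"
    by (subst degree_prod_eq_sum_degree) auto
  have "r \<noteq> 0" using r d_pos by (auto simp: d_def)
  moreover have "(\<Prod>i<d. [:-c i,1:]) \<noteq> 0" using deg_prod d_pos by auto
  ultimately have "degree (lift Q) = d + degree r" using r deg_prod by (simp add: degree_mult_eq)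
  then have "degree r = 0" by (simp add: d_def)
  moreover have "lead_coeff r = 1" using arg_cong[OF r, of lead_coeff] mon
    by (simp add: lead_coeff_mult lead_coeff_prod coeff_map_poly)
  ultimately have "r = 1" by (auto elim!: degree_eq_zeroE)
  then show lift_Q: "lift Q = (\<Prod>i<degree Q. [:-(\<beta> ^ (CARD('a) ^ i)), 1:])"
    using r by (simp add: c_def d_def)
  have "poly (lift Q) (c d) = 0" using root by (simp add: c_def frobenius_poly_lift)
  then obtain i where "i < d" "c d = c i"
    unfolding lift_Q by (auto simp: poly_prod c_def d_def)
  then show "\<beta> ^ (CARD('a) ^ degree Q) = \<beta>"
    using coincide[of d i] d_pos by (cases "i = 0") (auto simp: c_def d_def)
qed

lemma frobenius_period_dvd:
  fixes Q :: "'a::{field_gcd,finite} poly"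
  assumes irr: "irreducible Q" and mon: "lead_coeff Q = 1" and root: "poly (lift Q) \<beta> = 0"
    and per: "\<beta> ^ (CARD('a) ^ n) = \<beta>"
  shows "degree Q dvd n"
proof -
  define d where "d = degree Q"
  have multiple: "\<beta> ^ (CARD('a) ^ (d * t)) = \<beta>" for t
  proof (induction t)
    case (Suc t)
    have "CARD('a) ^ (d * Suc t) = CARD('a) ^ (d * t) * CARD('a) ^ d"
      by (simp add: mult_Suc_right power_add mult.commute)
    then have "\<beta> ^ (CARD('a) ^ (d * Suc t)) = (\<beta> ^ (CARD('a) ^ (d * t))) ^ (CARD('a) ^ d)"
      by (simp add: power_mult)
    then show ?case using Suc frobenius_orbit(2)[OF irr mon root] by (simp add: d_def)
  qed simp
  have "CARD('a) ^ n = CARD('a) ^ (d * (n div d)) * CARD('a) ^ (n mod d)"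
    by (simp flip: power_add)
  then have "\<beta> ^ (CARD('a) ^ n) = (\<beta> ^ (CARD('a) ^ (d * (n div d)))) ^ (CARD('a) ^ (n mod d))"
    by (simp add: power_mult)
  then have "\<beta> ^ (CARD('a) ^ (n mod d)) = \<beta>" using multiple per by simp
  then have "n mod d = 0"
    using no_short_period[OF irr root, of "n mod d"] irreducible_degree_pos[OF irr] by (auto simp: d_def)
  then show ?thesis by (simp add: d_def mod_eq_0_iff_dvd)
qed

section \<open>Euler's criterion\<close>

lemma eval_root_fermat:
  fixes Q b :: "'a::{field_gcd,finite} poly"
  assumes irr: "irreducible Q" and mon: "lead_coeff Q = 1" and root: "poly (lift Q) \<beta> = 0"
    and "\<not> Q dvd b"
  shows "poly (lift b) \<beta> ^ (CARD('a) ^ degree Q - 1) = 1"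
proof -
  define x where "x = poly (lift b) \<beta>"
  have "x \<noteq> 0" using root_lift_iff_dvd[OF irr root] assms(4) by (simp add: x_def)
  moreover have "x * x ^ (CARD('a) ^ degree Q - 1) = x ^ (CARD('a) ^ degree Q)"
    by (simp flip: power_Suc)
  moreover have "x ^ (CARD('a) ^ degree Q) = x"
    using frobenius_orbit(2)[OF irr mon root] by (simp add: x_def flip: frobenius_poly_lift)
  ultimately show ?thesis by (simp flip: x_def)
qed

lemma card_le_twice_card_image:
  assumes "finite A" "\<And>y. card {x\<in>A. f x = y} \<le> 2"
  shows "card A \<le> 2 * card (f ` A)"
proof -
  have "card A = card (\<Union>y\<in>f ` A. {x\<in>A. f x = y})" by (rule arg_cong[of _ _ card]) auto
  also have "\<dots> \<le> (\<Sum>y\<in>f ` A. card {x\<in>A. f x = y})"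
    by (rule card_UN_le) (use assms in auto)
  also have "\<dots> \<le> (\<Sum>y\<in>f ` A. 2)" by (rule sum_mono) (use assms in auto)
  finally show ?thesis by simp
qed

lemma card_square_roots_le2:
  fixes y :: "'b::field"
  shows "finite {z. z^2 = y}" "card {z. z^2 = y} \<le> 2"
proof -
  have "{z. z^2 = y} = {z. poly (monom 1 2 - [:y:]) z = 0}" by (auto simp: poly_monom)
  then show "finite {z. z^2 = y}" "card {z. z^2 = y} \<le> 2"
    using card_roots_monom_minus[of "[:y:]" 2] by auto
qed

lemma half_power_card:
  assumes "odd CARD('a::{field,finite})"
  shows "CARD('a) ^ d - 1 = 2 * ((CARD('a) ^ d - 1) div 2)"
  using assms by (simp add: odd_pos)

lemma half_power_card_pos:
  assumes "odd CARD('a::{field,finite})" "d > 0"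
  shows "(CARD('a) ^ d - 1) div 2 > 0"
proof -
  have "CARD('a) \<ge> 3" using assms(1) card_finite_field_ge2[where ?'a='a] by presburger
  moreover have "CARD('a) ^ 1 \<le> CARD('a) ^ d" by (rule power_increasing) (use assms(2) in auto)
  ultimately show ?thesis by simp
qed

(* The nonresidue half of Euler's criterion, by counting: the q^d - 1 units g(\<beta>) have at least
   (q^d - 1)/2 distinct squares, all of them roots of X^((q^d-1)/2) - 1; a nonsquare a(\<beta>) that
   were also a root would be one root too many. *)
lemma nonresidue_half_power:
  fixes Q a :: "'a::{field_gcd,finite} poly"
  assumes irr: "irreducible Q" and mon: "lead_coeff Q = 1" and root: "poly (lift Q) \<beta> = 0"
    and odd: "odd CARD('a)" and nondvd: "\<not> Q dvd a" and nonsq: "\<nexists>b. b^2 mod Q = a mod Q"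
  shows "poly (lift a) \<beta> ^ ((CARD('a) ^ degree Q - 1) div 2) \<noteq> 1"
proof
  define d where "d = degree Q"
  define h where "h = (CARD('a) ^ d - 1) div 2"
  define A where "A = polys_below d - {0 :: 'a poly}"
  define sq where "sq g = poly (lift g) \<beta> ^ 2" for g
  assume "poly (lift a) \<beta> ^ ((CARD('a) ^ degree Q - 1) div 2) = 1"
  then have a_root: "poly (lift a) \<beta> ^ h = 1" by (simp add: h_def d_def)
  have two_h: "CARD('a) ^ d - 1 = 2 * h" unfolding h_def by (rule half_power_card[OF odd])
  have h_pos: "h > 0"
    unfolding h_def d_def by (rule half_power_card_pos[OF odd irreducible_degree_pos[OF irr]])
  have zero_below: "(0 :: 'a poly) \<in> polys_below d" by (simp add: polys_below_def)
  have finite_A: "finite A" using card_polys_below(1)[where ?'a='a] by (simp add: A_def)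
  have card_A: "card A = 2 * h"
    using card_Diff_singleton[OF zero_below] card_polys_below(2)[where ?'a='a, of d] two_h
    by (simp add: A_def)
  have unit: "\<not> Q dvd g" if "g \<in> A" for g
  proof
    assume "Q dvd g"
    moreover have "g \<noteq> 0" "degree g < degree Q"
      using that irreducible_degree_pos[OF irr] by (auto simp: A_def polys_below_eq d_def)
    ultimately show False using dvd_imp_degree_le[of Q g] by simp
  qed
  have fibres: "card {g\<in>A. sq g = y} \<le> 2" for y
  proof -
    let ?ev = "\<lambda>g. poly (lift g) \<beta>"
    have "inj_on ?ev {g\<in>A. sq g = y}"
      using eval_root_inj_on_polys_below[OF irr root] by (rule inj_on_subset) (auto simp: A_def d_def)
    then have "card {g\<in>A. sq g = y} = card (?ev ` {g\<in>A. sq g = y})" by (simp add: card_image)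
    also have "\<dots> \<le> card {z. z^2 = y}"
      by (rule card_mono[OF card_square_roots_le2(1)]) (auto simp: sq_def)
    also have "\<dots> \<le> 2" by (rule card_square_roots_le2(2))
    finally show ?thesis .
  qed
  have roots: "insert (poly (lift a) \<beta>) (sq ` A) \<subseteq> {z. poly (monom 1 h - 1) z = 0}"
  proof -
    have "sq g ^ h = 1" if "g \<in> A" for g
    proof -
      have "poly (lift g) \<beta> ^ (2 * h) = 1"
        using eval_root_fermat[OF irr mon root unit[OF that]] two_h by (simp add: d_def)
      then show ?thesis by (simp add: sq_def flip: power_mult)
    qed
    then show ?thesis using a_root by (auto simp: poly_monom)
  qed
  have "poly (lift a) \<beta> \<notin> sq ` A"
  proof
    assume "poly (lift a) \<beta> \<in> sq ` A"
    then obtain g where "poly (lift g) \<beta> ^ 2 = poly (lift a) \<beta>" by (auto simp: sq_def)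
    then have "Q dvd g^2 - a" using root_lift_iff_dvd[OF irr root, of "g^2 - a"] by simp
    then have "g^2 mod Q = a mod Q" by (simp add: mod_eq_dvd_iff)
    then show False using nonsq by blast
  qed
  moreover have "degree (1 :: 'a alg_closure poly) < h" using h_pos by simp
  note h_roots = card_roots_monom_minus[OF this]
  have "card (insert (poly (lift a) \<beta>) (sq ` A)) \<le> h"
    using card_mono[OF h_roots(1) roots] h_roots(2) by linarith
  ultimately have "card (sq ` A) + 1 \<le> h" using finite_A by simp
  moreover have "card A \<le> 2 * card (sq ` A)" by (rule card_le_twice_card_image[OF finite_A fibres])
  ultimately show False using card_A by simp
qed

lemma euler_criterion:
  fixes Q a :: "'a::{field_gcd,finite} poly"
  assumes irr: "irreducible Q" and mon: "lead_coeff Q = 1" and root: "poly (lift Q) \<beta> = 0"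
    and odd: "odd CARD('a)"
  shows "poly (lift a) \<beta> ^ ((CARD('a) ^ degree Q - 1) div 2) = of_int (leg_sym a Q)"
proof -
  define h where "h = (CARD('a) ^ degree Q - 1) div 2"
  define x where "x = poly (lift a) \<beta>"
  have two_h: "CARD('a) ^ degree Q - 1 = 2 * h" unfolding h_def by (rule half_power_card[OF odd])
  consider (dvd) "Q dvd a" | (residue) b where "\<not> Q dvd a" "b^2 mod Q = a mod Q"
    | (nonresidue) "\<not> Q dvd a" "\<nexists>b. b^2 mod Q = a mod Q" by blast
  then show ?thesis
  proof cases
    case dvd
    then have "x = 0" using root_lift_iff_dvd[OF irr root] by (simp add: x_def)
    moreover have "h > 0"
      unfolding h_def by (rule half_power_card_pos[OF odd irreducible_degree_pos[OF irr]])
    ultimately show ?thesis using dvd by (simp add: leg_sym_def x_def h_def)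
  next
    case residue
    then have "Q dvd b^2 - a" by (simp add: mod_eq_dvd_iff)
    then have "poly (lift b) \<beta> ^ 2 = x"
      using root_lift_iff_dvd[OF irr root, of "b^2 - a"] by (simp add: x_def)
    moreover have "\<not> Q dvd b"
    proof
      assume "Q dvd b"
      then have "Q dvd b^2" by (simp add: power2_eq_square)
      then have "Q dvd b^2 - (b^2 - a)" using \<open>Q dvd b^2 - a\<close> by (rule dvd_diff)
      then show False using residue(1) by simp
    qed
    then have "poly (lift b) \<beta> ^ (2 * h) = 1" using eval_root_fermat[OF irr mon root] two_h by simp
    ultimately have "x ^ h = 1" by (metis power_mult)
    then show ?thesis using residue by (auto simp: leg_sym_def x_def h_def)
  next
    case nonresidue
    have "x ^ (2 * h) = 1" using eval_root_fermat[OF irr mon root nonresidue(1)] two_h by (simp add: x_def)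
    then have "(x ^ h)^2 = 1" by (simp add: mult.commute flip: power_mult)
    moreover have "x ^ h \<noteq> 1"
      using nonresidue_half_power[OF irr mon root odd nonresidue] by (simp add: x_def h_def)
    ultimately have "x ^ h = -1" by (simp add: power2_eq_1_iff)
    then show ?thesis using nonresidue by (simp add: leg_sym_def x_def h_def)
  qed
qed

lemma leg_sym_range: "leg_sym a Q \<in> {-1, 0, 1}"
  by (simp add: leg_sym_def)

(* In odd characteristic the values -1, 0, 1 stay distinct in the algebraic closure, so identities
   for the symbol may be proved there. *)
lemma of_int_sign_inj:
  assumes "odd CARD('a::{field,finite})" "a \<in> {-1, 0, 1}" "b \<in> {-1, 0, 1}"
    and "(of_int a :: 'a alg_closure) = of_int b"
  shows "a = b"
proof (rule ccontr)
  assume "a \<noteq> b"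
  have "int CHAR('a) dvd a - b"
    using assms(4) of_int_eq_0_iff_char_dvd[where ?'a="'a alg_closure", of "a - b"] by simp
  then have "\<bar>int CHAR('a)\<bar> \<le> \<bar>a - b\<bar>" using \<open>a \<noteq> b\<close> by (intro dvd_imp_le_int) simp_all
  moreover have "\<bar>a - b\<bar> \<le> 2" using assms(2,3) by auto
  ultimately show False using CHAR_ge3_if_odd_card[OF assms(1)] by simp
qed

lemma leg_sym_mod: "leg_sym (a mod Q) Q = leg_sym a Q"
  by (simp add: leg_sym_def dvd_mod_iff)

lemma leg_sym_one:
  assumes "irreducible Q" shows "leg_sym 1 Q = 1"
proof -
  have "\<not> Q dvd 1" using assms irreducible_not_unit by blast
  moreover have "\<exists>b. b^2 mod Q = 1 mod Q" by (intro exI[of _ 1]) simp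
  ultimately show ?thesis by (simp add: leg_sym_def)
qed

lemma leg_sym_mult:
  fixes Q a b :: "'a::{field_gcd,finite} poly"
  assumes irr: "irreducible Q" and mon: "lead_coeff Q = 1" and odd: "odd CARD('a)"
  shows "leg_sym (a * b) Q = leg_sym a Q * leg_sym b Q"
proof -
  obtain \<beta> where root: "poly (lift Q) \<beta> = 0" using exists_root_lift[OF irr] .
  define h where "h = (CARD('a) ^ degree Q - 1) div 2"
  have euler: "poly (lift g) \<beta> ^ h = of_int (leg_sym g Q)" for g
    unfolding h_def by (rule euler_criterion[OF irr mon root odd])
  have "(of_int (leg_sym (a * b) Q) :: 'a alg_closure) = poly (lift a) \<beta> ^ h * poly (lift b) \<beta> ^ h"
    by (simp add: power_mult_distrib flip: euler)
  also have "\<dots> = of_int (leg_sym a Q * leg_sym b Q)" by (simp add: euler)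
  finally show ?thesis
    using leg_sym_range[of a Q] leg_sym_range[of b Q] by (intro of_int_sign_inj[OF odd leg_sym_range]) auto
qed

lemma leg_sym_prod_mset:
  fixes Q :: "'a::{field_gcd,finite} poly"
  assumes irr: "irreducible Q" and mon: "lead_coeff Q = 1" and odd: "odd CARD('a)"
  shows "leg_sym (prod_mset M) Q = (\<Prod>x\<in>#M. leg_sym x Q)"
  by (induction M) (simp_all add: leg_sym_one[OF irr] leg_sym_mult[OF irr mon odd])

lemma half_power_card_geometric:
  assumes "odd CARD('a::{field,finite})"
  shows "(CARD('a) ^ N - 1) div 2 = (CARD('a) - 1) div 2 * (\<Sum>j<N. CARD('a) ^ j)"
proof -
  have pos: "CARD('a) > 0" by simp
  have "int (CARD('a) ^ N - 1) = int CARD('a) ^ N - 1" using pos by (simp add: of_nat_diff)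
  also have "\<dots> = (int CARD('a) - 1) * (\<Sum>j<N. int CARD('a) ^ j)" by (rule power_diff_1_eq)
  also have "\<dots> = int ((CARD('a) - 1) * (\<Sum>j<N. CARD('a) ^ j))" using pos by (simp add: of_nat_diff)
  finally have "CARD('a) ^ N - 1 = (CARD('a) - 1) * (\<Sum>j<N. CARD('a) ^ j)" by (simp only: of_nat_eq_iff)
  moreover have "CARD('a) - 1 = 2 * ((CARD('a) - 1) div 2)" using half_power_card[OF assms, of 1] by simp
  ultimately have "CARD('a) ^ N - 1 = 2 * ((CARD('a) - 1) div 2 * (\<Sum>j<N. CARD('a) ^ j))"
    by (metis mult.assoc)
  then show ?thesis by simp
qed

lemma odd_geometric_sum:
  assumes "odd (q::nat)" shows "odd (\<Sum>j<N. q^j) \<longleftrightarrow> odd N"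
  by (induction N) (use assms in auto)

(* A nonsquare constant c is a nonresidue modulo any P of odd degree N: by Euler's criterion the
   symbol is (c^((q-1)/2))^(1 + q + ... + q^(N-1)) = (-1)^(odd number).  The value c^((q-1)/2) = -1
   is Euler's criterion for the prime X. *)
lemma leg_sym_nonsquare_const:
  fixes P :: "'a::{field_gcd,finite} poly"
  assumes irr: "irreducible P" and mon: "lead_coeff P = 1" and odd_deg: "odd (degree P)"
    and odd: "odd CARD('a)" and nonsq: "\<forall>y. y^2 \<noteq> c"
  shows "leg_sym [:c:] P = -1"
proof -
  define s where "s = (CARD('a) - 1) div 2"
  have "leg_sym [:c:] [:0,1:] = -1"
  proof -
    have "\<not> [:0,1:] dvd [:c:]" using nonsq[rule_format, of 0] poly_eq_0_iff_dvd[of "[:c:]" 0] by auto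
    moreover have "\<nexists>b. b^2 mod [:0,1:] = [:c:] mod [:0,1:]"
    proof
      assume "\<exists>b. b^2 mod [:0,1:] = [:c:] mod [:0,1:]"
      then obtain b where "[:0,1:] dvd b^2 - [:c:]" by (auto simp: mod_eq_dvd_iff)
      then have "poly b 0 ^ 2 = c" using poly_eq_0_iff_dvd[of "b^2 - [:c:]" 0] by simp
      then show False using nonsq by auto
    qed
    ultimately show ?thesis by (simp add: leg_sym_def)
  qed
  then have c_s: "to_ac c ^ s = -1"
    using euler_criterion[of "[:0,1:]" 0 "[:c:]", OF irreducible_linear_field_poly _ _ odd]
    by (simp add: s_def map_poly_pCons)
  obtain \<alpha> where root: "poly (lift P) \<alpha> = 0" using exists_root_lift[OF irr] .
  have "(of_int (leg_sym [:c:] P) :: 'a alg_closure) = poly (lift [:c:]) \<alpha> ^ ((CARD('a) ^ degree P - 1) div 2)"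
    using euler_criterion[OF irr mon root odd] by simp
  also have "\<dots> = (to_ac c ^ s) ^ (\<Sum>j<degree P. CARD('a) ^ j)"
    unfolding half_power_card_geometric[OF odd] s_def by (simp add: map_poly_pCons power_mult)
  also have "\<dots> = of_int (-1)"
    using c_s odd_geometric_sum[of "CARD('a)" "degree P"] odd odd_deg by simp
  finally show ?thesis using of_int_sign_inj[OF odd leg_sym_range, of "-1"] by simp
qed

section \<open>Quadratic reciprocity for q = 1 mod 4\<close>

(* Raising P(\<beta>) to the power 1 + q + ... + q^(d-1) multiplies the values of P at the d
   conjugates of \<beta>; factoring P over its own conjugates gives a product of differences of roots. *)
lemma eval_power_geometric:
  fixes P :: "'a::{field_gcd,finite} poly"
  assumes irr: "irreducible P" and mon: "lead_coeff P = 1" and root: "poly (lift P) \<alpha> = 0"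
  shows "poly (lift P) \<beta> ^ (\<Sum>i<d. CARD('a) ^ i)
           = (\<Prod>i<d. \<Prod>j<degree P. \<beta> ^ (CARD('a) ^ i) - \<alpha> ^ (CARD('a) ^ j))"
proof -
  have "poly (lift P) \<beta> ^ (\<Sum>i<d. CARD('a) ^ i) = (\<Prod>i<d. poly (lift P) \<beta> ^ (CARD('a) ^ i))"
    by (rule power_sum)
  also have "\<dots> = (\<Prod>i<d. poly (lift P) (\<beta> ^ (CARD('a) ^ i)))" by (simp add: frobenius_poly_lift)
  also have "\<dots> = (\<Prod>i<d. \<Prod>j<degree P. \<beta> ^ (CARD('a) ^ i) - \<alpha> ^ (CARD('a) ^ j))"
    by (subst frobenius_orbit(1)[OF irr mon root]) (simp add: poly_prod)
  finally show ?thesis .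
qed

lemma prod_differences_swap:
  fixes x y :: "nat \<Rightarrow> 'b::comm_ring_1"
  shows "(\<Prod>j<N. \<Prod>i<d. y j - x i) = (-1) ^ (d * N) * (\<Prod>i<d. \<Prod>j<N. x i - y j)"
proof -
  have "(\<Prod>i<d. y j - x i) = (-1) ^ d * (\<Prod>i<d. x i - y j)" for j
    using prod_uminus[of "\<lambda>i. x i - y j" "{..<d}"] by simp
  then have "(\<Prod>j<N. \<Prod>i<d. y j - x i) = (\<Prod>j<N. (-1) ^ d * (\<Prod>i<d. x i - y j))" by simp
  also have "\<dots> = (-1) ^ (d * N) * (\<Prod>j<N. \<Prod>i<d. x i - y j)"
    by (simp add: prod.distrib power_mult)
  finally show ?thesis by (simp add: prod.swap[of _ "{..<N}"])
qed

(* Both symbols equal R^((q-1)/2) up to the sign (-1)^(dN (q-1)/2), where R is the product of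
   all differences of roots; for q = 1 mod 4 the exponent (q-1)/2 is even. *)
theorem quadratic_reciprocity:
  fixes P Q :: "'a::{field_gcd,finite} poly"
  assumes irrP: "irreducible P" and monP: "lead_coeff P = 1"
    and irrQ: "irreducible Q" and monQ: "lead_coeff Q = 1"
    and q4: "CARD('a) mod 4 = 1"
  shows "leg_sym P Q = leg_sym Q P"
proof -
  have odd: "odd CARD('a)" using q4 by presburger
  obtain \<beta> where \<beta>: "poly (lift Q) \<beta> = 0" using exists_root_lift[OF irrQ] .
  obtain \<alpha> where \<alpha>: "poly (lift P) \<alpha> = 0" using exists_root_lift[OF irrP] .
  define q where "q = CARD('a)"
  define s where "s = (q - 1) div 2"
  define R where "R = (\<Prod>i<degree Q. \<Prod>j<degree P. \<beta> ^ (q ^ i) - \<alpha> ^ (q ^ j))"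
  have even_s: "even s" unfolding s_def q_def using q4 by presburger
  have swap: "poly (lift Q) \<alpha> ^ (\<Sum>j<degree P. q ^ j) = (-1) ^ (degree Q * degree P) * R"
    unfolding eval_power_geometric[OF irrQ monQ \<beta>] R_def q_def
    by (rule prod_differences_swap)
  have "(of_int (leg_sym P Q) :: 'a alg_closure) = poly (lift P) \<beta> ^ ((q ^ degree Q - 1) div 2)"
    using euler_criterion[OF irrQ monQ \<beta> odd, of P] by (simp add: q_def)
  also have "\<dots> = (poly (lift P) \<beta> ^ (\<Sum>i<degree Q. q ^ i)) ^ s"
    unfolding q_def s_def half_power_card_geometric[OF odd] by (simp add: mult.commute power_mult)
  also have "\<dots> = R ^ s" by (simp add: eval_power_geometric[OF irrP monP \<alpha>] R_def q_def)
  also have "\<dots> = ((-1) ^ (degree Q * degree P) * R) ^ s"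
    using even_s by (simp add: power_mult_distrib flip: power_mult)
  also have "\<dots> = (poly (lift Q) \<alpha> ^ (\<Sum>j<degree P. q ^ j)) ^ s"
    by (simp only: swap)
  also have "\<dots> = poly (lift Q) \<alpha> ^ ((q ^ degree P - 1) div 2)"
    unfolding q_def s_def half_power_card_geometric[OF odd] by (simp add: mult.commute power_mult)
  also have "\<dots> = of_int (leg_sym Q P)"
    using euler_criterion[OF irrP monP \<alpha> odd, of Q] by (simp add: q_def)
  finally show ?thesis using of_int_sign_inj[OF odd leg_sym_range leg_sym_range] by blast
qed

lemma monic_of_prime:
  fixes Q :: "'a::field_gcd poly"
  assumes "prime Q" shows "lead_coeff Q = 1"
proof -
  have lc: "lead_coeff Q \<noteq> 0" using assms by auto
  then have "is_unit (lead_coeff Q)" by (simp add: dvd_field_iff)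
  then have "normalize (lead_coeff Q) = 1" by (rule is_unit_normalize)
  then have "unit_factor (lead_coeff Q) = lead_coeff Q"
    using unit_factor_mult_normalize[of "lead_coeff Q"] by simp
  moreover have "lead_coeff Q = lead_coeff Q / unit_factor (lead_coeff Q)"
    using coeff_normalize[of Q "degree Q"] normalize_prime[OF assms] by simp
  ultimately show ?thesis using lc by (metis divide_self)
qed

lemma normalize_monic:
  fixes f :: "'a::field_gcd poly"
  assumes "lead_coeff f = 1" shows "normalize f = f"
  using assms by (simp add: poly_eq_iff coeff_normalize)

(* By reciprocity, chi_P(f) = (P/f) is the symbol (f/P) for monic f. *)
lemma chi_eq_leg_sym:
  fixes P f :: "'a::{field_gcd,finite} poly"
  assumes irr: "irreducible P" and mon: "lead_coeff P = 1" and monf: "lead_coeff f = 1"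
    and q4: "CARD('a) mod 4 = 1"
  shows "chi P f = leg_sym f P"
proof -
  have odd: "odd CARD('a)" using q4 by presburger
  have "chi P f = (\<Prod>Q\<in>#prime_factorization f. leg_sym P Q)" by (simp add: chi_def jac_sym_def)
  also have "\<dots> = (\<Prod>Q\<in>#prime_factorization f. leg_sym Q P)"
  proof (rule arg_cong[where f = prod_mset], rule image_mset_cong)
    fix Q assume "Q \<in># prime_factorization f"
    then have "prime Q" by (rule in_prime_factors_imp_prime)
    moreover from this have "irreducible Q" by (simp flip: prime_elem_iff_irreducible)
    ultimately show "leg_sym P Q = leg_sym Q P"
      using quadratic_reciprocity[OF irr mon _ monic_of_prime q4] by blast
  qed
  also have "\<dots> = leg_sym (prod_mset (prime_factorization f)) P"
    by (simp add: leg_sym_prod_mset[OF irr mon odd])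
  also have "prod_mset (prime_factorization f) = f"
    using prod_mset_prime_factorization[of f] normalize_monic[OF monf] monf by (cases "f = 0") auto
  finally show ?thesis .
qed

lemma L_coeff_eq_char_sum:
  fixes P :: "'a::{field_gcd,finite} poly"
  assumes irr: "irreducible P" and mon: "lead_coeff P = 1" and q4: "CARD('a) mod 4 = 1"
  shows "L_coeff P n = (\<Sum>f\<in>monic_deg n. leg_sym f P)"
  unfolding L_coeff_def monic_deg_def
  by (rule sum.cong) (use chi_eq_leg_sym[OF irr mon _ q4] in auto)

section \<open>The character sums\<close>

(* Multiplying the residue of f modulo P by a constant c while keeping the quotient part. *)
definition scale_residue :: "'a::field poly \<Rightarrow> 'a \<Rightarrow> 'a poly \<Rightarrow> 'a poly" where
  "scale_residue P c f = f + smult (c - 1) (f mod P)"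

lemma scale_residue_one: "scale_residue P 1 f = f"
  by (simp add: scale_residue_def)

lemma scale_residue_mod: "scale_residue P c f mod P = smult c (f mod P)"
proof -
  have "scale_residue P c f mod P = f mod P + smult (c - 1) (f mod P)"
    by (simp add: scale_residue_def poly_mod_add_left mod_smult_left)
  also have "\<dots> = smult c (f mod P)" by (simp add: smult_diff_left)
  finally show ?thesis .
qed

lemma scale_residue_compose:
  "scale_residue P c (scale_residue P c' f) = scale_residue P (c * c') f"
  by (simp add: scale_residue_def scale_residue_mod[unfolded scale_residue_def] algebra_simps
      flip: smult_add_left)

lemma scale_residue_monic_deg:
  fixes P :: "'a::field poly"
  assumes "degree P > 0" "degree P \<le> n" "f \<in> monic_deg n"
  shows "scale_residue P c f \<in> monic_deg n"
proof -
  have "degree (smult (c - 1) (f mod P)) < n"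
  proof (cases "f mod P = 0")
    case False
    moreover have "P \<noteq> 0" using assms(1) by auto
    ultimately have "degree (f mod P) < degree P" using degree_mod_less' by blast
    then show ?thesis using assms(2) degree_smult_le[of "c - 1" "f mod P"] by linarith
  qed (use assms in simp)
  then show ?thesis unfolding scale_residue_def by (rule monic_deg_add_lower[OF assms(3)])
qed

(* For deg P \<le> n and odd deg P, scaling residues by a nonsquare constant is a bijection of the
   monic polynomials of degree n that reverses the sign of (f/P); so the character sum vanishes. *)
lemma char_sum_vanishes:
  fixes P :: "'a::{field_gcd,finite} poly"
  assumes irr: "irreducible P" and mon: "lead_coeff P = 1" and odd_deg: "odd (degree P)"
    and deg: "degree P \<le> n" and odd: "odd CARD('a)"
  shows "(\<Sum>f\<in>monic_deg n. leg_sym f P) = 0"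
proof -
  obtain c :: 'a where nonsq: "\<forall>y. y^2 \<noteq> c" using finite_field_exists_nonsquare[OF odd] by blast
  have c0: "c \<noteq> 0" using nonsq[rule_format, of 0] by auto
  have deg_pos: "degree P > 0" by (rule irreducible_degree_pos[OF irr])
  let ?\<sigma> = "scale_residue P c" and ?\<tau> = "scale_residue P (inverse c)"
  have sign: "leg_sym (?\<sigma> f) P = - leg_sym f P" for f
  proof -
    have "leg_sym (?\<sigma> f) P = leg_sym (smult c (f mod P)) P" by (metis leg_sym_mod scale_residue_mod)
    also have "smult c (f mod P) = [:c:] * (f mod P)" by simp
    also have "leg_sym ([:c:] * (f mod P)) P = leg_sym [:c:] P * leg_sym f P"
      by (simp only: leg_sym_mult[OF irr mon odd] leg_sym_mod)
    finally show ?thesis using leg_sym_nonsquare_const[OF irr mon odd_deg odd nonsq] by simp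
  qed
  have "(\<Sum>f\<in>monic_deg n. - leg_sym f P) = (\<Sum>f\<in>monic_deg n. leg_sym f P)"
    by (rule sum.reindex_bij_witness[of _ ?\<tau> ?\<sigma>])
       (use c0 in \<open>auto simp: scale_residue_compose scale_residue_one sign scale_residue_monic_deg[OF deg_pos deg]\<close>)
  then show ?thesis by (simp add: sum_negf)
qed

lemma odd_sum_pm1:
  fixes g :: "'b \<Rightarrow> int"
  assumes "finite A" "\<forall>x\<in>A. g x = 1 \<or> g x = -1"
  shows "odd (sum g A) \<longleftrightarrow> odd (card A)"
  using assms by (induction A rule: finite_induct) auto

(* For n < deg P no monic f of degree n is divisible by P, so the sum has q^n terms \<plusminus>1. *)
lemma char_sum_odd:
  fixes P :: "'a::{field_gcd,finite} poly"
  assumes "n < degree P" and odd: "odd CARD('a)"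
  shows "odd (\<Sum>f\<in>monic_deg n. leg_sym f P)"
proof -
  have "leg_sym f P = 1 \<or> leg_sym f P = -1" if "f \<in> monic_deg n" for f
  proof -
    have "f \<noteq> 0" "degree f < degree P" using that assms(1) by (auto simp: monic_deg_def)
    then have "\<not> P dvd f" using dvd_imp_degree_le[of P f] by auto
    then show ?thesis by (simp add: leg_sym_def)
  qed
  then show ?thesis
    using odd_sum_pm1[OF card_monic_deg(1)[where ?'a='a, of n]] card_monic_deg(2)[where ?'a='a, of n] odd
    by simp
qed

lemma L_coeff_vanishes:
  fixes P :: "'a::{field_gcd,finite} poly"
  assumes "irreducible P" "lead_coeff P = 1" "odd (degree P)" "degree P \<le> n" "CARD('a) mod 4 = 1"
  shows "L_coeff P n = 0"
  using L_coeff_eq_char_sum[OF assms(1,2,5)] char_sum_vanishes[OF assms(1-4)] assms(5) by presburger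

lemma L_coeff_odd:
  fixes P :: "'a::{field_gcd,finite} poly"
  assumes "irreducible P" "lead_coeff P = 1" "n < degree P" "CARD('a) mod 4 = 1"
  shows "odd (L_coeff P n)"
  using L_coeff_eq_char_sum[OF assms(1,2,4)] char_sum_odd[OF assms(3)] assms(4) by presburger

(* x + y sqrt q = 0 with q odd forces x^2 = q y^2, so x and y have the same parity. *)
lemma sqrt_odd_relation_parity:
  fixes x y :: int and q :: nat
  assumes "odd q" "real_of_int x + real_of_int y * sqrt q = 0"
  shows "odd x \<longleftrightarrow> odd y"
proof -
  have "real_of_int x = - (real_of_int y * sqrt q)" using assms(2) by simp
  then have "real_of_int x ^ 2 = real_of_int y ^ 2 * real q" by (simp add: power_mult_distrib)
  then have "x ^ 2 = y ^ 2 * int q" by (metis of_int_eq_iff of_int_mult of_int_of_nat_eq of_int_power)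
  then show ?thesis using assms(1) by (metis even_mult_iff even_of_nat even_power zero_less_numeral)
qed

lemma sum_split_even_odd:
  fixes F :: "nat \<Rightarrow> 'b::comm_monoid_add"
  shows "(\<Sum>n<2*g+1. F n) = (\<Sum>k<g+1. F (2*k)) + (\<Sum>k<g. F (2*k+1))"
  by (induction g) (simp_all add: algebra_simps)

lemma odd_sum_all_odd:
  fixes f :: "nat \<Rightarrow> int"
  assumes "\<And>k. k < m \<Longrightarrow> odd (f k)"
  shows "odd (\<Sum>k<m. f k) \<longleftrightarrow> odd m"
  using assms by (induction m) auto

(* A polynomial of degree \<le> 2g with odd integer coefficients does not vanish at q^(-1/2) for odd
   q: multiplying by q^g turns the value into E + D sqrt q with E = a_0 q^g + a_2 q^(g-1) + ... of
   the parity of g+1 and D = a_1 q^(g-1) + a_3 q^(g-2) + ... of the parity of g. *)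
lemma odd_coeffs_eval_nonzero:
  fixes a :: "nat \<Rightarrow> int" and q :: nat
  assumes odd_q: "odd q" and odd_a: "\<And>n. n < 2*g+1 \<Longrightarrow> odd (a n)"
  shows "(\<Sum>n<2*g+1. real_of_int (a n) * (real q powr (-1/2)) ^ n) \<noteq> 0"
proof
  define r where "r = sqrt (real q)"
  define E where "E = (\<Sum>k<g+1. a (2*k) * int q ^ (g-k))"
  define D where "D = (\<Sum>k<g. a (2*k+1) * int q ^ (g-k-1))"
  assume zero: "(\<Sum>n<2*g+1. real_of_int (a n) * (real q powr (-1/2)) ^ n) = 0"
  have q0: "real q > 0" using odd_q by (simp add: odd_pos)
  have r2: "r^2 = real q" and r0: "r > 0" using q0 by (simp_all add: r_def)
  define s where "s = real q powr (-1/2)"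
  have s_eq: "s = inverse r" using q0 by (simp add: s_def r_def powr_minus powr_half_sqrt)
  have even_term: "real q ^ g * s ^ (2*k) = real q ^ (g-k)" if "k \<le> g" for k
  proof -
    have "s ^ (2*k) = inverse (real q) ^ k" by (simp add: s_eq power_mult r2 power_inverse)
    moreover have "real q ^ g = real q ^ (g-k) * real q ^ k" using that by (simp flip: power_add)
    ultimately show ?thesis using q0 by (simp add: power_inverse field_simps)
  qed
  have odd_term: "real q ^ g * s ^ Suc (2*k) = real q ^ (g - Suc k) * r" if "k < g" for k
  proof -
    have "real q ^ g * s ^ Suc (2*k) = real q ^ (g-k) * inverse r"
      using even_term[of k] that by (simp add: s_eq)
    also have "real q ^ (g-k) = real q ^ (g - Suc k) * r^2"
      using that r2 by (simp flip: power_Suc2 add: Suc_diff_Suc)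
    finally show ?thesis using r0 by (simp add: power2_eq_square)
  qed
  have "real q ^ g * (\<Sum>n<2*g+1. real_of_int (a n) * s ^ n)
        = (\<Sum>k<g+1. real_of_int (a (2*k)) * (real q ^ g * s ^ (2*k)))
          + (\<Sum>k<g. real_of_int (a (2*k+1)) * (real q ^ g * s ^ (2*k+1)))"
    unfolding sum_split_even_odd by (simp add: distrib_left sum_distrib_left mult_ac)
  also have "\<dots> = (\<Sum>k<g+1. real_of_int (a (2*k)) * real q ^ (g-k))
          + (\<Sum>k<g. real_of_int (a (2*k+1)) * (real q ^ (g-k-1) * r))"
    by (intro arg_cong2[where f = "(+)"] sum.cong) (simp_all add: even_term odd_term del: power_Suc)
  also have "\<dots> = real_of_int E + real_of_int D * r"
    by (simp add: E_def D_def sum_distrib_left sum_distrib_right mult_ac)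
  finally have "real q ^ g * (\<Sum>n<2*g+1. real_of_int (a n) * s ^ n) = real_of_int E + real_of_int D * r" .
  then have "real_of_int E + real_of_int D * sqrt (real q) = 0" using zero by (simp add: r_def s_def)
  then have "odd E \<longleftrightarrow> odd D" by (rule sqrt_odd_relation_parity[OF odd_q])
  moreover have "odd E \<longleftrightarrow> odd (g+1)"
    unfolding E_def by (rule odd_sum_all_odd) (use odd_a odd_q in auto)
  moreover have "odd D \<longleftrightarrow> odd g"
    unfolding D_def by (rule odd_sum_all_odd) (use odd_a odd_q in auto)
  ultimately show False by simp
qed

theorem L_half_nonzero:
  fixes P :: "'a::{field_gcd,finite} poly"
  assumes irr: "irreducible P" and mon: "lead_coeff P = 1" and deg: "degree P = 2*g+1"
    and q4: "CARD('a) mod 4 = 1"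
  shows "L_half P \<noteq> 0"
proof -
  have "L_half P = (\<Sum>n<2*g+1. real_of_int (L_coeff P n) * (real CARD('a) powr (-1/2)) ^ n)"
    unfolding L_half_def
    by (rule suminf_finite) (use L_coeff_vanishes[OF irr mon _ _ q4] deg in auto)
  also have "\<dots> \<noteq> 0"
    by (rule odd_coeffs_eval_nonzero) (use q4 L_coeff_odd[OF irr mon _ q4] deg in \<open>auto, presburger\<close>)
  finally show ?thesis .
qed

section \<open>Counting monic irreducible polynomials\<close>

definition Irr :: "nat \<Rightarrow> 'a::{field_gcd,finite} poly set" where
  "Irr n = {P. lead_coeff P = 1 \<and> irreducible P \<and> degree P = n}"

lemma Irr_subset_monic_deg: "Irr n \<subseteq> monic_deg n"
  by (auto simp: Irr_def monic_deg_def)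

lemma finite_Irr: "finite (Irr n :: 'a::{field_gcd,finite} poly set)"
  using card_monic_deg(1)[where ?'a='a] Irr_subset_monic_deg finite_subset by blast

lemma card_Irr_le: "card (Irr n :: 'a::{field_gcd,finite} poly set) \<le> CARD('a) ^ n"
  using card_monic_deg[where ?'a='a, of n] Irr_subset_monic_deg card_mono by metis

lemma of_nat_card_power_eq_0:
  assumes "n > 0"
  shows "(of_nat (CARD('a::{field,finite}) ^ n) :: 'a) = 0"
proof -
  obtain k where k: "CARD('a) = CHAR('a) ^ k" using card_finite_field_CHAR_power by blast
  have "k > 0" using k card_finite_field_ge2[where ?'a='a] by (cases k) auto
  then have "CHAR('a) dvd CHAR('a) ^ (k * n)" using assms by (simp add: dvd_power)
  then have "CHAR('a) dvd CARD('a) ^ n" by (simp add: k power_mult)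
  then show ?thesis by (simp only: of_nat_eq_0_iff_char_dvd)
qed

(* X^(q^n) - X has derivative -1, hence no repeated irreducible factor. *)
lemma frobenius_poly_squarefree:
  assumes "n > 0"
  shows "squarefree (monom 1 (CARD('a::{field_gcd,finite}) ^ n) - [:0,1:] :: 'a poly)"
    (is "squarefree ?F")
proof -
  have "pderiv ?F = -1"
    using of_nat_card_power_eq_0[OF assms, where ?'a='a]
    by (simp add: pderiv_diff pderiv_monom pderiv_pCons del: of_nat_power)
       (simp add: poly_eq_iff coeff_pCons split: nat.split)
  moreover have "?F \<noteq> 0" using \<open>pderiv ?F = -1\<close> by auto
  moreover have "\<not> p ^ 2 dvd ?F" if "prime p" for p :: "'a poly"
  proof
    assume "p ^ 2 dvd ?F"
    then obtain H where H: "?F = p ^ 2 * H" by (elim dvdE)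
    have "pderiv ?F = p * (p * pderiv H + 2 * H * pderiv p)"
      unfolding H by (simp add: pderiv_mult power2_eq_square algebra_simps)
    then have "p dvd 1" using \<open>pderiv ?F = -1\<close> by (metis dvd_minus_iff dvd_triv_left)
    then show False using that by (simp add: prime_def prime_elem_def)
  qed
  ultimately show ?thesis by (simp add: squarefree_factorial_semiring)
qed

(* An irreducible factor Q of X^(q^n) - X has its roots fixed by the n-th Frobenius iterate,
   hence deg Q | n. *)
lemma frobenius_poly_factor_degree:
  fixes Q :: "'a::{field_gcd,finite} poly"
  assumes irr: "irreducible Q" and mon: "lead_coeff Q = 1"
    and dvd: "Q dvd monom 1 (CARD('a) ^ n) - [:0,1:]"
  shows "degree Q dvd n"
proof -
  obtain \<beta> where root: "poly (lift Q) \<beta> = 0" using exists_root_lift[OF irr] .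
  have "poly (lift (monom 1 (CARD('a) ^ n) - [:0,1:])) \<beta> = 0"
    using root_lift_iff_dvd[OF irr root] dvd by blast
  then have "\<beta> ^ (CARD('a) ^ n) = \<beta>" by (simp add: poly_monom map_poly_pCons)
  then show ?thesis by (rule frobenius_period_dvd[OF irr mon root])
qed

(* Gauss: X^(q^n) - X is a product of distinct monic irreducibles of degrees dividing n, and
   comparing degrees gives q^n \<le> sum over d | n of d |Irr d|. *)
lemma card_Irr_divisors_lower:
  assumes "n > 0"
  shows "CARD('a::{field_gcd,finite}) ^ n \<le> (\<Sum>d | d dvd n. d * card (Irr d :: 'a poly set))"
proof -
  define F :: "'a poly" where "F = monom 1 (CARD('a) ^ n) - [:0,1:]"
  define S where "S = prime_factors F"
  have sqf: "squarefree F" unfolding F_def by (rule frobenius_poly_squarefree[OF assms])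
  then have F0: "F \<noteq> 0" by auto
  have "CARD('a) ^ 1 \<le> CARD('a) ^ n" by (rule power_increasing) (use assms in auto)
  then have deg_X: "degree [:0, 1::'a:] < CARD('a) ^ n" using card_finite_field_ge2[where ?'a='a] by simp
  have deg_F: "degree F = CARD('a) ^ n" and lc_F: "lead_coeff F = 1"
    using monom_minus_lower[OF deg_X] by (simp_all add: F_def)
  have primes_S: "prime Q" "irreducible Q" "lead_coeff Q = 1" if "Q \<in> S" for Q
  proof -
    show "prime Q" using that by (simp add: S_def in_prime_factors_imp_prime)
    then show "irreducible Q" "lead_coeff Q = 1"
      by (simp_all add: monic_of_prime flip: prime_elem_iff_irreducible)
  qed
  have "F = (\<Prod>Q\<in>S. Q ^ multiplicity Q F)"
    using prod_prime_factors[OF F0] normalize_monic[OF lc_F] by (simp add: S_def)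
  also have "\<dots> = (\<Prod>Q\<in>S. Q)"
    using sqf F0 by (intro prod.cong) (simp_all add: S_def squarefree_factorial_semiring')
  finally have "CARD('a) ^ n = (\<Sum>Q\<in>S. degree Q)"
    using deg_F degree_prod_eq_sum_degree[of S "\<lambda>Q. Q"] primes_S(1) by force
  also have "\<dots> \<le> (\<Sum>Q\<in>(\<Union>d\<in>{d. d dvd n}. Irr d :: 'a poly set). degree Q)"
  proof (rule sum_mono2)
    show "finite (\<Union>d\<in>{d. d dvd n}. Irr d :: 'a poly set)"
      using assms finite_Irr by (auto simp: finite_divisors_nat)
    show "S \<subseteq> (\<Union>d\<in>{d. d dvd n}. Irr d)"
    proof
      fix Q assume "Q \<in> S"
      moreover from this have "Q dvd F" by (simp add: S_def in_prime_factors_iff)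
      ultimately show "Q \<in> (\<Union>d\<in>{d. d dvd n}. Irr d)"
        using frobenius_poly_factor_degree[of Q n] primes_S by (auto simp: Irr_def F_def)
    qed
  qed simp
  also have "\<dots> = (\<Sum>d | d dvd n. \<Sum>Q\<in>(Irr d :: 'a poly set). degree Q)"
    by (rule sum.UNION_disjoint) (use assms finite_Irr in \<open>auto simp: finite_divisors_nat Irr_def\<close>)
  also have "\<dots> = (\<Sum>d | d dvd n. d * card (Irr d :: 'a poly set))"
    by (rule sum.cong) (auto simp: Irr_def)
  finally show ?thesis .
qed

lemma geometric_sum_le_twice:
  assumes "(q::nat) \<ge> 2" shows "(\<Sum>d\<le>m. q^d) \<le> 2 * q^m"
proof (induction m)
  case (Suc m)
  have "2 * q^m \<le> q^Suc m" using assms by simp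
  moreover have "(\<Sum>d\<le>Suc m. q^d) = (\<Sum>d\<le>m. q^d) + q^Suc m" by simp
  ultimately show ?case using Suc by linarith
qed simp

lemma four_mult_le_power5: "4 * g \<le> (5::nat) ^ (g+1)"
proof (induction g)
  case (Suc g)
  have "(1::nat) \<le> 5^g" "4 * g \<le> 5 * (5::nat)^g" using Suc by simp_all
  moreover have "(5::nat) ^ (Suc g + 1) = 25 * 5^g" "4 * Suc g = 4 + 4 * g" by simp_all
  ultimately show ?case by linarith
qed simp

(* For odd n = 2g+1 the proper divisors of n are at most g, and they contribute at most
   2 g q^g \<le> q^n / 2 to Gauss's sum once q \<ge> 5; so n |Irr n| \<ge> q^n / 2. *)
lemma card_Irr_odd_lower:
  assumes q5: "CARD('a::{field_gcd,finite}) \<ge> 5"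
  shows "CARD('a) ^ (2*g+1) \<le> 2 * (2*g+1) * card (Irr (2*g+1) :: 'a poly set)"
proof -
  define n where "n = 2*g+1"
  define q where "q = CARD('a)"
  define I where "I d = card (Irr d :: 'a poly set)" for d
  define D where "D = {d. d dvd n}"
  have finite_D: "finite D" unfolding D_def n_def by (simp add: finite_divisors_nat)
  have proper: "D - {n} \<subseteq> {1..g}"
  proof
    fix d assume d: "d \<in> D - {n}"
    then obtain k where k: "n = d * k" by (auto simp: D_def elim: dvdE)
    moreover have "d * k \<noteq> 0" by (simp add: k[symmetric] n_def)
    ultimately have "d \<noteq> 0" "k \<noteq> 0" "k \<noteq> 1" using d by auto
    then have "2 * d \<le> k * d" by (intro mult_le_mono1) linarith
    then have "2 * d \<le> n" using k by (simp add: mult.commute)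
    then show "d \<in> {1..g}" using \<open>d \<noteq> 0\<close> by (simp add: n_def)
  qed
  have "q^n \<le> (\<Sum>d\<in>D. d * I d)"
    using card_Irr_divisors_lower[where ?'a='a, of n] by (simp add: n_def q_def I_def D_def)
  also have "\<dots> = n * I n + (\<Sum>d\<in>D - {n}. d * I d)"
    using sum.remove[OF finite_D, of n] by (simp add: D_def)
  also have "(\<Sum>d\<in>D - {n}. d * I d) \<le> (\<Sum>d\<in>{1..g}. d * I d)"
    by (rule sum_mono2[OF _ proper]) auto
  also have "\<dots> \<le> (\<Sum>d\<in>{1..g}. g * q^d)"
    by (rule sum_mono) (auto intro: mult_le_mono simp: I_def q_def card_Irr_le)
  also have "\<dots> \<le> g * (\<Sum>d\<le>g. q^d)"
    unfolding sum_distrib_left[symmetric] by (intro mult_le_mono2 sum_mono2) auto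
  also have "\<dots> \<le> g * (2 * q^g)"
    using geometric_sum_le_twice[of q g] q5 by (simp add: q_def)
  finally have A: "q^n \<le> n * I n + g * (2 * q^g)" by simp
  have "4 * g \<le> q^(g+1)"
    using four_mult_le_power5[of g] power_mono[of 5 q "g+1"] q5 by (simp add: q_def)
  then have "q^g * (4 * g) \<le> q^g * q^(g+1)" by (rule mult_le_mono2)
  also have "q^g * q^(g+1) = q^n" by (simp add: n_def mult_2 flip: power_add)
  finally have "4 * (g * q^g) \<le> q^n" by (simp add: mult_ac)
  with A have "q^n \<le> 2 * n * I n" by linarith
  then show ?thesis by (simp add: n_def q_def I_def)
qed

theorem corollary2p6:
  assumes "CARD('a::{field_gcd,finite}) mod 4 = 1"
  shows "\<exists>c>0. \<exists>G. \<forall>g\<ge>G.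
           real (card {P :: 'a poly. lead_coeff P = 1 \<and> irreducible P \<and> degree P = 2*g+1
                                       \<and> L_half P \<noteq> 0})
           \<ge> c * real CARD('a) ^ (2*g+1) / (real (2*g+1))^2"
proof (intro exI[of _ "1/2"] conjI exI[of _ 0] allI impI)
  fix g :: nat
  define n where "n = 2*g+1"
  define I where "I = real (card (Irr n :: 'a poly set))"
  have all_nonzero:
    "{P :: 'a poly. lead_coeff P = 1 \<and> irreducible P \<and> degree P = 2*g+1 \<and> L_half P \<noteq> 0} = Irr n"
    using L_half_nonzero[OF _ _ _ assms] by (auto simp: Irr_def n_def)
  have "CARD('a) \<ge> 5" using assms card_finite_field_ge2[where ?'a='a] by presburger
  then have "real (CARD('a) ^ n) \<le> real (2 * n * card (Irr n :: 'a poly set))"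
    using card_Irr_odd_lower[of g] unfolding n_def by (simp only: of_nat_le_iff)
  then have count: "real CARD('a) ^ n \<le> 2 * real n * I" by (simp add: I_def)
  have n1: "real n \<ge> 1" by (simp add: n_def)
  have "1/2 * real CARD('a) ^ n / (real n)^2 \<le> 1/2 * (2 * real n * I) / (real n)^2"
    using count by (intro divide_right_mono mult_left_mono) auto
  also have "\<dots> = I / real n" using n1 by (simp add: power2_eq_square)
  also have "\<dots> \<le> I" using n1 by (simp add: I_def divide_le_eq mult_le_cancel_left1)
  finally show "1/2 * real CARD('a) ^ (2*g+1) / (real (2*g+1))^2 \<le>
      real (card {P :: 'a poly. lead_coeff P = 1 \<and> irreducible P \<and> degree P = 2*g+1 \<and> L_half P \<noteq> 0})"
    unfolding all_nonzero by (simp only: n_def I_def)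
qed simp

end
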